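(* Let $F$ be Thompson's group with standard generators $x_0,x_1$. Let $g\in F$ and let $H=\langle x_0,(x_0x_1)^g\rangle$, where $(x_0x_1)^g=g^{-1}x_0x_1g$. Then $\mathrm{Cl}(H)=F$.
   Context: Thompson's group $F$ is the group of all piecewise linear homeomorphisms of $[0,1]$ with finitely many breakpoints, all at finite dyadic fractions, and all slopes integer powers of $2$. Composition is from left to right ($fg$ means first $f$, then $g$), and $a^g=g^{-1}ag$. Writing points of $(0,1)$ as binary expansions $.s$, $x_0$ maps $.00\alpha\mapsto .0\alpha$, $.01\alpha\mapsto .10\alpha$, $.1\alpha\mapsto .11\alpha$, and $x_1$ maps $.0\alpha\mapsto .0\alpha$, $.100\alpha\mapsto .10\alpha$, $.101\alpha\mapsto .110\alpha$, $.11\alpha\mapsto .111\alpha$, for every infinite binary word $\alpha$. For a subgroup $H\le F$, the closure $\mathrm{Cl}(H)$ is the subgroup of $F$ consisting of all piecewise-$H$ functions, i.e. all $f\in F$ for which there is a finite subdivision of $[0,1]$ into subintervals such that on each subinterval $f$ coincides with some element of $H$ (equivalently, the topological full group of $H$ acting on the finite dyadic fractions of $[0,1]$). *)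

theory Defs
  imports Complex_Main
begin

definition dyadic :: "real \<Rightarrow> bool" where
  "dyadic x \<longleftrightarrow> (\<exists>(m::int) (n::nat). x = real_of_int m / 2 ^ n)"

text \<open>Elements of Thompson's group F, realised as functions real to real that are
  the identity outside [0,1] (so that they are bijections of the real line and
  composition / inversion are the usual ones).\<close>
definition ThompsonF :: "(real \<Rightarrow> real) set" where
  "ThompsonF = {f.
     (\<forall>x. x \<notin> {0..1} \<longrightarrow> f x = x) \<and>
     continuous_on {0..1} f \<and> strict_mono_on {0..1} f \<and> f 0 = 0 \<and> f 1 = 1 \<and>
     (\<exists>P. finite P \<and> P \<subseteq> {0..1} \<and> 0 \<in> P \<and> 1 \<in> P \<and> (\<forall>p\<in>P. dyadic p) \<and>
        (\<forall>a\<in>P. \<forall>b\<in>P. a < b \<and> {a<..<b} \<inter> P = {} \<longrightarrow>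
            (\<exists>(k::int) (c::real). \<forall>x\<in>{a..b}. f x = 2 powr (real_of_int k) * x + c)))}"

text \<open>Product with left-to-right composition: fg means first f, then g.\<close>
definition fmul :: "(real \<Rightarrow> real) \<Rightarrow> (real \<Rightarrow> real) \<Rightarrow> (real \<Rightarrow> real)" where
  "fmul f g = g \<circ> f"

definition fconj :: "(real \<Rightarrow> real) \<Rightarrow> (real \<Rightarrow> real) \<Rightarrow> (real \<Rightarrow> real)" where
  "fconj a g = fmul (fmul (inv g) a) g"

text \<open>Generators x0 and x1 (explicit affine pieces read off from the binary description).\<close>
definition x0 :: "real \<Rightarrow> real" where
  "x0 x = (if x < 0 \<or> x > 1 then x
           else if x \<le> 1/4 then 2 * x
           else if x \<le> 1/2 then x + 1/4
           else x / 2 + 1/2)"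

definition x1 :: "real \<Rightarrow> real" where
  "x1 x = (if x < 0 \<or> x > 1 then x
           else if x \<le> 1/2 then x
           else if x \<le> 5/8 then 2 * x - 1/2
           else if x \<le> 3/4 then x + 1/8
           else x / 2 + 1/2)"

inductive_set gen_subgroup :: "(real \<Rightarrow> real) set \<Rightarrow> (real \<Rightarrow> real) set"
  for S :: "(real \<Rightarrow> real) set" where
  gen_id: "id \<in> gen_subgroup S"
| gen_base: "s \<in> S \<Longrightarrow> s \<in> gen_subgroup S"
| gen_inv: "s \<in> S \<Longrightarrow> inv s \<in> gen_subgroup S"
| gen_mul: "a \<in> gen_subgroup S \<Longrightarrow> b \<in> gen_subgroup S \<Longrightarrow> fmul a b \<in> gen_subgroup S"

definition closureF :: "(real \<Rightarrow> real) set \<Rightarrow> (real \<Rightarrow> real) set" where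
  "closureF H = {f \<in> ThompsonF.
     \<exists>P. finite P \<and> P \<subseteq> {0..1} \<and> 0 \<in> P \<and> 1 \<in> P \<and>
        (\<forall>a\<in>P. \<forall>b\<in>P. a < b \<and> {a<..<b} \<inter> P = {} \<longrightarrow>
            (\<exists>h\<in>H. \<forall>x\<in>{a..b}. f x = h x))}"

end

theory Submission
  imports Defs
begin

text \<open>Let \<open>H = \<langle>x0, y\<rangle>\<close> with \<open>y = (x0 x1)\<^sup>g\<close>. Near 0 and near 1 the conjugator \<open>g\<close> is linear
  with slope a power of 2, so a power of \<open>x0\<^sup>-\<^sup>1\<close>, followed by a power of \<open>y\<close> and another power of
  \<open>x0\<^sup>-\<^sup>1\<close>, agrees with \<open>x0 x1\<close> on \<open>[1/4, 1/2]\<close>. Together with \<open>x0\<close> this lets \<open>H\<close> carry, by an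
  affine map, every standard dyadic interval that avoids 0 and 1 onto \<open>[1/4, 1/2]\<close>, and the
  intervals \<open>[0, 2\<^sup>-\<^sup>n]\<close> and \<open>[1 - 2\<^sup>-\<^sup>n, 1]\<close> onto \<open>[0, 1/2]\<close> and \<open>[1/2, 1]\<close>. On every interval of a
  sufficiently fine standard dyadic subdivision, an element of F is the affine map onto another
  standard dyadic interval of the same kind, hence agrees there with an element of \<open>H\<close>.\<close>

definition x0_inv :: "real \<Rightarrow> real" where
  "x0_inv x = (if x < 0 \<or> x > 1 then x
              else if x \<le> 1/2 then x / 2
              else if x \<le> 3/4 then x - 1/4
              else 2 * x - 1)"

lemma x0_inv_x0 [simp]: "x0_inv (x0 x) = x"
  unfolding x0_def x0_inv_def by (auto simp: field_simps)

lemma x0_x0_inv [simp]: "x0 (x0_inv x) = x"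
  unfolding x0_def x0_inv_def by (auto simp: field_simps)

lemma bij_x0: "bij x0"
  by (rule bij_betw_byWitness[where f' = x0_inv]) auto

lemma inv_x0: "inv x0 = x0_inv"
  by (rule inv_unique_comp) (auto simp: fun_eq_iff)

definition x1_inv :: "real \<Rightarrow> real" where
  "x1_inv x = (if x < 0 \<or> x > 1 then x
              else if x \<le> 1/2 then x
              else if x \<le> 3/4 then x / 2 + 1/4
              else if x \<le> 7/8 then x - 1/8
              else 2 * x - 1)"

lemma bij_x1: "bij x1"
proof (rule bij_betw_byWitness[where f' = x1_inv])
  show "\<forall>x\<in>UNIV. x1_inv (x1 x) = x" unfolding x1_def x1_inv_def by (auto simp: field_simps)
  show "\<forall>x\<in>UNIV. x1 (x1_inv x) = x" unfolding x1_def x1_inv_def by (auto simp: field_simps)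
qed auto

locale bij_group =
  fixes H :: "(real \<Rightarrow> real) set"
  assumes id_mem: "id \<in> H"
    and comp_mem: "a \<in> H \<Longrightarrow> b \<in> H \<Longrightarrow> b \<circ> a \<in> H"
    and inv_mem: "h \<in> H \<Longrightarrow> inv h \<in> H"
    and bij_mem: "h \<in> H \<Longrightarrow> bij h"
begin

lemma funpow_mem: "h \<in> H \<Longrightarrow> h ^^ n \<in> H"
  by (induction n) (simp_all add: id_mem comp_mem)

end

lemma bij_gen_subgroup: "h \<in> gen_subgroup S \<Longrightarrow> \<forall>s\<in>S. bij s \<Longrightarrow> bij h"
  by (induction rule: gen_subgroup.induct) (auto simp: fmul_def intro: bij_comp bij_imp_bij_inv)

lemma inv_gen_subgroup: "h \<in> gen_subgroup S \<Longrightarrow> \<forall>s\<in>S. bij s \<Longrightarrow> inv h \<in> gen_subgroup S"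
proof (induction rule: gen_subgroup.induct)
  case (gen_mul a b)
  then have "inv (fmul a b) = fmul (inv b) (inv a)"
    using bij_gen_subgroup by (simp add: fmul_def o_inv_distrib)
  with gen_mul show ?case by (simp add: gen_subgroup.gen_mul)
qed (auto simp: inv_inv_eq intro: gen_subgroup.intros)

lemma bij_group_gen_subgroup:
  assumes "\<forall>s\<in>S. bij s"
  shows "bij_group (gen_subgroup S)"
proof
  show "id \<in> gen_subgroup S" by (rule gen_id)
  show "b \<circ> a \<in> gen_subgroup S" if "a \<in> gen_subgroup S" "b \<in> gen_subgroup S" for a b
    using gen_mul[OF that] by (simp add: fmul_def)
qed (use assms bij_gen_subgroup inv_gen_subgroup in auto)

context
  fixes f :: "real \<Rightarrow> real"
  assumes f: "f \<in> ThompsonF"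
begin

lemma ThompsonF_outside: "x \<notin> {0..1} \<Longrightarrow> f x = x"
  and ThompsonF_continuous: "continuous_on {0..1} f"
  and ThompsonF_strict_mono: "strict_mono_on {0..1} f"
  and ThompsonF_0 [simp]: "f 0 = 0"
  and ThompsonF_1 [simp]: "f 1 = 1"
  using f unfolding ThompsonF_def by auto

lemma ThompsonF_maps_unit: "x \<in> {0..1} \<Longrightarrow> f x \<in> {0..1}"
  using strict_mono_on_leD[OF ThompsonF_strict_mono, of 0 x] strict_mono_on_leD[OF ThompsonF_strict_mono, of x 1]
  by auto

lemma ThompsonF_eq_iff: "x \<in> {0..1} \<Longrightarrow> y \<in> {0..1} \<Longrightarrow> f x = f y \<longleftrightarrow> x = y"
  using strict_mono_on_eqD[OF ThompsonF_strict_mono, of x y] by blast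

lemma bij_ThompsonF: "bij f"
proof (rule bijI)
  show "inj f"
  proof (rule injI)
    fix x y assume "f x = f y"
    then show "x = y"
      using ThompsonF_eq_iff ThompsonF_maps_unit ThompsonF_outside
      by (cases "x \<in> {0..1}"; cases "y \<in> {0..1}") force+
  qed
  have "y \<in> range f" for y
  proof (cases "y \<in> {0..1}")
    case True
    then obtain x where "f x = y"
      using IVT'[of f 0 y 1] ThompsonF_continuous by auto
    then show ?thesis by (metis rangeI)
  next
    case False
    then show ?thesis using ThompsonF_outside[OF False] by (metis rangeI)
  qed
  then show "surj f" by auto
qed

end

subsection \<open>Standard dyadic intervals\<close>

definition dyadic_interval :: "int \<Rightarrow> nat \<Rightarrow> real set" where
  "dyadic_interval j n = {of_int j / 2 ^ n .. (of_int j + 1) / 2 ^ n}"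

definition dyadic_affine :: "int \<Rightarrow> nat \<Rightarrow> int \<Rightarrow> nat \<Rightarrow> real \<Rightarrow> real" where
  "dyadic_affine j n j' n' x = (of_int j' + (x * 2 ^ n - of_int j)) / 2 ^ n'"

definition carries :: "(real \<Rightarrow> real) set \<Rightarrow> int \<Rightarrow> nat \<Rightarrow> int \<Rightarrow> nat \<Rightarrow> bool" where
  "carries H j n j' n' \<longleftrightarrow> (\<exists>h\<in>H. \<forall>x\<in>dyadic_interval j n. h x = dyadic_affine j n j' n' x)"

lemma carriesI:
  "h \<in> H \<Longrightarrow> (\<And>x. x \<in> dyadic_interval j n \<Longrightarrow> h x = dyadic_affine j n j' n' x) \<Longrightarrow> carries H j n j' n'"
  unfolding carries_def by blast

lemma mem_dyadic_interval_iff: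
  "x \<in> dyadic_interval j n \<longleftrightarrow> of_int j \<le> x * 2 ^ n \<and> x * 2 ^ n \<le> of_int j + 1"
  by (simp add: dyadic_interval_def divide_le_eq le_divide_eq)

lemma dyadic_affine_mem:
  "x \<in> dyadic_interval j n \<Longrightarrow> dyadic_affine j n j' n' x \<in> dyadic_interval j' n'"
  by (simp add: mem_dyadic_interval_iff dyadic_affine_def)

lemma dyadic_affine_trans:
  "x \<in> dyadic_interval j n \<Longrightarrow>
     dyadic_affine j' n' j'' n'' (dyadic_affine j n j' n' x) = dyadic_affine j n j'' n'' x"
  by (simp add: dyadic_affine_def)

lemma dyadic_affine_inverse:
  "dyadic_affine j n j' n' (dyadic_affine j' n' j n y) = y"
  by (simp add: dyadic_affine_def)

lemma dyadic_interval_refine: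
  assumes "0 \<le> r" "r < 2 ^ d"
  shows "dyadic_interval (j * 2 ^ d + r) (n + d) \<subseteq> dyadic_interval j n"
proof
  fix x assume x: "x \<in> dyadic_interval (j * 2 ^ d + r) (n + d)"
  define X D where "X = x * 2 ^ n" and "D = (2::real) ^ d"
  have "of_int j * D + of_int r \<le> X * D" "X * D \<le> of_int j * D + of_int r + 1"
    using x by (simp_all add: mem_dyadic_interval_iff power_add X_def D_def mult.assoc)
  moreover have "of_int (r + 1) \<le> (of_int (2 ^ d) :: real)"
    using assms by (simp only: of_int_le_iff)
  then have "of_int r + 1 \<le> D" by (simp add: D_def)
  moreover have "0 \<le> (of_int r::real)" using assms by simp
  ultimately have "of_int j * D \<le> X * D" "X * D \<le> (of_int j + 1) * D"
    by (linarith, simp add: distrib_right)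
  then have "of_int j \<le> X" "X \<le> of_int j + 1"
    by (simp_all add: D_def)
  then show "x \<in> dyadic_interval j n"
    by (simp add: mem_dyadic_interval_iff X_def)
qed

lemma dyadic_affine_refine:
  "dyadic_affine j n j' n' x = dyadic_affine (j * 2 ^ d + r) (n + d) (j' * 2 ^ d + r) (n' + d) x"
  by (simp add: dyadic_affine_def field_simps power_add)

context bij_group
begin

lemma carries_refl: "carries H j n j n"
  by (rule carriesI[OF id_mem]) (simp add: dyadic_affine_def)

lemma carries_sym:
  assumes "carries H j n j' n'"
  shows "carries H j' n' j n"
proof -
  obtain h where h: "h \<in> H" "\<And>x. x \<in> dyadic_interval j n \<Longrightarrow> h x = dyadic_affine j n j' n' x"
    using assms unfolding carries_def by blast
  have "inv h y = dyadic_affine j' n' j n y" if y: "y \<in> dyadic_interval j' n'" for y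
  proof -
    have "h (dyadic_affine j' n' j n y) = y"
      using h(2)[OF dyadic_affine_mem[OF y]] by (simp add: dyadic_affine_inverse)
    then show ?thesis using bij_mem[OF h(1)] by (metis bij_inv_eq_iff)
  qed
  then show ?thesis by (rule carriesI[OF inv_mem[OF h(1)]])
qed

lemma carries_trans:
  assumes "carries H j n j' n'" "carries H j' n' j'' n''"
  shows "carries H j n j'' n''"
proof -
  obtain h where h: "h \<in> H" "\<And>x. x \<in> dyadic_interval j n \<Longrightarrow> h x = dyadic_affine j n j' n' x"
    using assms(1) unfolding carries_def by blast
  obtain h' where h': "h' \<in> H" "\<And>x. x \<in> dyadic_interval j' n' \<Longrightarrow> h' x = dyadic_affine j' n' j'' n'' x"
    using assms(2) unfolding carries_def by blast
  have "(h' \<circ> h) x = dyadic_affine j n j'' n'' x" if "x \<in> dyadic_interval j n" for x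
    using that h(2) h'(2) dyadic_affine_mem dyadic_affine_trans by simp
  then show ?thesis by (rule carriesI[OF comp_mem[OF h(1) h'(1)]])
qed

end

lemma carries_refine:
  assumes "carries H j n j' n'" "0 \<le> r" "r < 2 ^ d"
  shows "carries H (j * 2 ^ d + r) (n + d) (j' * 2 ^ d + r) (n' + d)"
  using assms dyadic_interval_refine[OF assms(2,3)] dyadic_affine_refine
  unfolding carries_def by (metis subsetD)

lemma dyadic_interval_subset:
  assumes "c * 2 ^ n \<le> j * 2 ^ m" "(j + 1) * 2 ^ m \<le> d * 2 ^ n"
  shows "dyadic_interval j n \<subseteq> {of_int c / 2 ^ m .. of_int d / 2 ^ m}"
proof -
  have "real_of_int (c * 2 ^ n) \<le> of_int (j * 2 ^ m)" "real_of_int ((j + 1) * 2 ^ m) \<le> of_int (d * 2 ^ n)"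
    using assms by (simp_all only: of_int_le_iff)
  then have "of_int c * 2 ^ n \<le> of_int j * (2::real) ^ m" "(of_int j + 1) * 2 ^ m \<le> of_int d * (2::real) ^ n"
    by simp_all
  then have "of_int c / 2 ^ m \<le> of_int j / (2::real) ^ n" "(of_int j + 1) / 2 ^ n \<le> of_int d / (2::real) ^ m"
    by (simp_all add: divide_le_eq le_divide_eq mult.commute)
  then show ?thesis unfolding dyadic_interval_def by auto
qed

subsection \<open>Transporting dyadic intervals inside a group\<close>

locale transport_group = bij_group +
  assumes x0_mem: "x0 \<in> H"
    and x0x1_on_middle: "\<exists>h\<in>H. \<forall>x\<in>{1/4..1/2}. h x = fmul x0 x1 x"
begin

lemma carries_by_x0:
  assumes "\<And>x. x \<in> dyadic_interval j n \<Longrightarrow> x0 x = dyadic_affine j n j' n' x"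
  shows "carries H j n j' n'"
  by (rule carriesI[OF x0_mem assms])

lemma carries_x0_left:
  assumes "0 \<le> j" "4 * (j + 1) \<le> 2 ^ Suc m"
  shows "carries H j (Suc m) j m"
proof (rule carries_by_x0)
  fix x assume "x \<in> dyadic_interval j (Suc m)"
  moreover have "dyadic_interval j (Suc m) \<subseteq> {of_int 0 / 2 ^ 2 .. of_int 1 / 2 ^ 2}"
    by (rule dyadic_interval_subset) (use assms in simp_all)
  ultimately show "x0 x = dyadic_affine j (Suc m) j m x"
    by (auto simp: x0_def dyadic_affine_def)
qed

lemma carries_x0_middle:
  assumes "2 ^ Suc (Suc m) \<le> 4 * j" "2 * (j + 1) \<le> 2 ^ Suc (Suc m)"
  shows "carries H j (Suc (Suc m)) (j + 2 ^ m) (Suc (Suc m))"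
proof (rule carries_by_x0)
  fix x assume "x \<in> dyadic_interval j (Suc (Suc m))"
  moreover have "dyadic_interval j (Suc (Suc m)) \<subseteq> {of_int 1 / 2 ^ 2 .. of_int 2 / 2 ^ 2}"
    by (rule dyadic_interval_subset) (use assms in simp_all)
  ultimately show "x0 x = dyadic_affine j (Suc (Suc m)) (j + 2 ^ m) (Suc (Suc m)) x"
    by (auto simp: x0_def dyadic_affine_def field_simps)
qed

lemma carries_x0_right:
  assumes "2 ^ n \<le> 2 * j" "j + 1 \<le> 2 ^ n"
  shows "carries H j n (j + 2 ^ n) (Suc n)"
proof (rule carries_by_x0)
  fix x assume "x \<in> dyadic_interval j n"
  moreover have "dyadic_interval j n \<subseteq> {of_int 1 / 2 ^ 1 .. of_int 2 / 2 ^ 1}"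
    by (rule dyadic_interval_subset) (use assms in simp_all)
  ultimately show "x0 x = dyadic_affine j n (j + 2 ^ n) (Suc n) x"
    by (auto simp: x0_def dyadic_affine_def field_simps)
qed

lemma carries_2_3_to_1_2: "carries H 2 3 1 2"
  and carries_3_3_to_1_2: "carries H 3 3 1 2"
proof -
  obtain h where h: "h \<in> H" "\<And>x. x \<in> {1/4..1/2} \<Longrightarrow> h x = x1 (x0 x)"
    using x0x1_on_middle by (auto simp: fmul_def)
  have x0_inv: "x0_inv \<in> H" using inv_mem[OF x0_mem] by (simp add: inv_x0)
  have "(x0_inv \<circ> h) x = dyadic_affine 2 3 1 2 x" if "x \<in> dyadic_interval 2 3" for x
  proof -
    have x: "1/4 \<le> x" "x \<le> 3/8" using that by (simp_all add: dyadic_interval_def)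
    have "h x = x1 (x0 x)" using h(2) x by simp
    also have "x0 x = x + 1/4" using x by (auto simp: x0_def)
    also have "x1 (x + 1/4) = 2 * x" using x by (auto simp: x1_def)
    finally have "(x0_inv \<circ> h) x = x0_inv (2 * x)" by simp
    also have "\<dots> = 2 * x - 1/4" using x by (auto simp: x0_inv_def)
    finally show ?thesis by (simp add: dyadic_affine_def)
  qed
  then show "carries H 2 3 1 2"
    by (rule carriesI[OF comp_mem[OF h(1) x0_inv]])
  have "(x0_inv \<circ> (x0_inv \<circ> h)) x = dyadic_affine 3 3 1 2 x" if "x \<in> dyadic_interval 3 3" for x
  proof -
    have x: "3/8 \<le> x" "x \<le> 1/2" using that by (simp_all add: dyadic_interval_def)
    have "h x = x1 (x0 x)" using h(2) x by simp
    also have "x0 x = x + 1/4" using x by (auto simp: x0_def)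
    also have "x1 (x + 1/4) = x + 3/8" using x by (auto simp: x1_def)
    finally have "(x0_inv \<circ> (x0_inv \<circ> h)) x = x0_inv (x0_inv (x + 3/8))" by simp
    also have "x0_inv (x + 3/8) = 2 * x - 1/4" using x by (auto simp: x0_inv_def)
    also have "x0_inv (2 * x - 1/4) = 2 * x - 1/2" using x by (auto simp: x0_inv_def)
    finally show ?thesis by (simp add: dyadic_affine_def)
  qed
  then show "carries H 3 3 1 2"
    by (rule carriesI[OF comp_mem[OF comp_mem[OF h(1) x0_inv] x0_inv]])
qed

lemma carries_second_quarter:
  assumes IH: "\<And>j. 0 < j \<Longrightarrow> j + 1 < 2 ^ Suc m \<Longrightarrow> carries H j (Suc m) 1 2"
    and j: "2 ^ m \<le> j" "j < 2 * 2 ^ m"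
  shows "carries H j (Suc (Suc m)) 1 2"
proof (cases m)
  case 0
  with j have "j = 1" by simp
  with 0 show ?thesis using carries_refl by (simp add: numeral_2_eq_2)
next
  case (Suc k)
  \<comment> \<open>Refine one of the two generating moves (\<open>j\<close> in the third or fourth eighth).\<close>
  obtain i r where i: "i \<in> {2, 3}" and r: "0 \<le> r" "r < 2 ^ k" and j_eq: "j = i * 2 ^ k + r"
  proof (cases "j < 3 * 2 ^ k")
    case True
    then show ?thesis using j Suc by (intro that[of 2 "j - 2 * 2 ^ k"]) auto
  next
    case False
    then show ?thesis using j Suc by (intro that[of 3 "j - 3 * 2 ^ k"]) auto
  qed
  have "carries H i 3 1 2"
    using i carries_2_3_to_1_2 carries_3_3_to_1_2 by auto
  then have "carries H (i * 2 ^ k + r) (3 + k) (1 * 2 ^ k + r) (2 + k)"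
    by (rule carries_refine[OF _ r])
  then have "carries H j (Suc (Suc m)) (2 ^ k + r) (Suc m)"
    using Suc j_eq by (simp add: numeral_3_eq_3 numeral_2_eq_2)
  moreover have "carries H (2 ^ k + r) (Suc m) 1 2"
    by (rule IH) (use r Suc in auto)
  ultimately show ?thesis by (rule carries_trans)
qed

lemma carries_interior:
  "0 < j \<Longrightarrow> j + 1 < 2 ^ n \<Longrightarrow> carries H j n 1 2"
proof (induction n arbitrary: j rule: less_induct)
  case (less n)
  have "2 \<le> n"
  proof (rule ccontr)
    assume "\<not> 2 \<le> n"
    then have "(2::int) ^ n \<le> 2 ^ 1" by (intro power_increasing) auto
    with less.prems show False by simp
  qed
  define m where "m = n - 2"
  have n: "n = Suc (Suc m)" using \<open>2 \<le> n\<close> unfolding m_def by simp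
  define Q :: int where "Q = 2 ^ m"
  have Q: "Q \<ge> 1" "(2::int) ^ n = 4 * Q" "(2::int) ^ Suc m = 2 * Q"
    unfolding n Q_def by simp_all
  have IH: "\<And>j. 0 < j \<Longrightarrow> j + 1 < 2 ^ Suc m \<Longrightarrow> carries H j (Suc m) 1 2"
    using less.IH n by auto
  have second: "\<And>j. Q \<le> j \<Longrightarrow> j < 2 * Q \<Longrightarrow> carries H j n 1 2"
    using carries_second_quarter[OF IH] n unfolding Q_def by auto
  \<comment> \<open>By the quarter of \<open>[0, 1]\<close> containing the interval: \<open>x0\<close> doubles the first quarter,
    translates the second onto the third, and halves the second half onto the fourth.\<close>
  consider "j < Q" | "Q \<le> j" "j < 2 * Q" | "2 * Q \<le> j" "j < 3 * Q" | "3 * Q \<le> j"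
    by linarith
  then show ?case
  proof cases
    case 1
    have "carries H j n j (Suc m)"
      unfolding n by (rule carries_x0_left) (use 1 less.prems Q n in auto)
    moreover have "carries H j (Suc m) 1 2"
      by (rule IH) (use 1 less.prems Q in auto)
    ultimately show ?thesis by (rule carries_trans)
  next
    case 2
    then show ?thesis by (rule second)
  next
    case 3
    have "carries H (j - Q) n j n"
      using carries_x0_middle[of m "j - Q"] 3 Q n unfolding Q_def by auto
    then have "carries H j n (j - Q) n" by (rule carries_sym)
    moreover have "carries H (j - Q) n 1 2" by (rule second) (use 3 in auto)
    ultimately show ?thesis by (rule carries_trans)
  next
    case 4
    have "carries H (j - 2 * Q) (Suc m) j n"
      using carries_x0_right[of "Suc m" "j - 2 * Q"] 4 Q less.prems n by auto
    then have "carries H j n (j - 2 * Q) (Suc m)" by (rule carries_sym)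
    moreover have "carries H (j - 2 * Q) (Suc m) 1 2" by (rule IH) (use 4 Q less.prems in auto)
    ultimately show ?thesis by (rule carries_trans)
  qed
qed

lemma carries_leftmost: "1 \<le> n \<Longrightarrow> carries H 0 n 0 1"
proof (induction n rule: dec_induct)
  case (step n)
  have "2 \<le> (2::int) ^ n" by (rule self_le_power) (use step in auto)
  then have "carries H 0 (Suc n) 0 n" by (intro carries_x0_left) auto
  then show ?case using step.IH by (rule carries_trans)
qed (rule carries_refl)

lemma carries_rightmost: "1 \<le> n \<Longrightarrow> carries H (2 ^ n - 1) n 1 1"
proof (induction n rule: dec_induct)
  case (step n)
  have "2 \<le> (2::int) ^ n" by (rule self_le_power) (use step in auto)
  then have "carries H (2 ^ n - 1) n (2 ^ n - 1 + 2 ^ n) (Suc n)" by (intro carries_x0_right) auto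
  then have "carries H (2 ^ Suc n - 1) (Suc n) (2 ^ n - 1) n" by (simp add: carries_sym)
  then show ?case using step.IH by (rule carries_trans)
qed (simp add: carries_refl)

lemma carries_same_kind:
  assumes "0 \<le> j" "j + 1 \<le> 2 ^ N" "0 \<le> j'" "j' + 1 \<le> 2 ^ N'" "1 \<le> N"
    and "j = 0 \<longleftrightarrow> j' = 0" "j + 1 = 2 ^ N \<longleftrightarrow> j' + 1 = 2 ^ N'"
  shows "carries H j N j' N'"
proof -
  have "1 \<le> N'"
  proof (rule ccontr)
    assume "\<not> 1 \<le> N'"
    then have "N' = 0" by simp
    then have "j' = 0" "j' + 1 = 2 ^ N'" using assms by auto
    then have "j = 0" "j + 1 = 2 ^ N" using assms by auto
    then have "(2::int) ^ N = 2 ^ 0" by simp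
    with \<open>1 \<le> N\<close> show False by (simp only: power_inject_exp)
  qed
  consider "j = 0" | "j + 1 = 2 ^ N" | "0 < j" "j + 1 < 2 ^ N"
    using assms by linarith
  then show ?thesis
  proof cases
    case 1
    have "carries H 0 N 0 1" "carries H 0 N' 0 1"
      using carries_leftmost assms \<open>1 \<le> N'\<close> by auto
    then have "carries H 0 N 0 N'" by (blast intro: carries_trans carries_sym)
    with 1 assms show ?thesis by simp
  next
    case 2
    have "carries H (2 ^ N - 1) N 1 1" "carries H (2 ^ N' - 1) N' 1 1"
      using carries_rightmost assms \<open>1 \<le> N'\<close> by auto
    then have "carries H (2 ^ N - 1) N (2 ^ N' - 1) N'" by (blast intro: carries_trans carries_sym)
    moreover have "j = 2 ^ N - 1" "j' = 2 ^ N' - 1" using 2 assms by auto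
    ultimately show ?thesis by simp
  next
    case 3
    then have "carries H j N 1 2" "carries H j' N' 1 2"
      using assms carries_interior by auto
    then show ?thesis by (blast intro: carries_trans carries_sym)
  qed
qed

end

definition adjacent_in :: "real set \<Rightarrow> real \<Rightarrow> real \<Rightarrow> bool" where
  "adjacent_in P a b \<longleftrightarrow> a \<in> P \<and> b \<in> P \<and> a < b \<and> {a<..<b} \<inter> P = {}"

lemma adjacent_in_Min_above:
  assumes "finite P" "a \<in> P" "b \<in> P" "a < b"
  shows "adjacent_in P a (Min {q \<in> P. a < q})"
proof -
  have "Min {q \<in> P. a < q} \<in> {q \<in> P. a < q}"
    using assms by (intro Min_in) auto
  moreover have "Min {q \<in> P. a < q} \<le> q" if "q \<in> P" "a < q" for q
    using assms that by (intro Min_le) auto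
  ultimately show ?thesis unfolding adjacent_in_def using assms
    by (metis (mono_tags, lifting) Int_emptyI greaterThanLessThan_iff leD mem_Collect_eq)
qed

lemma adjacent_in_Max_below:
  assumes "finite P" "a \<in> P" "b \<in> P" "a < b"
  shows "adjacent_in P (Max {q \<in> P. q < b}) b"
proof -
  have "Max {q \<in> P. q < b} \<in> {q \<in> P. q < b}"
    using assms by (intro Max_in) auto
  moreover have "q \<le> Max {q \<in> P. q < b}" if "q \<in> P" "q < b" for q
    using assms that by (intro Max_ge) auto
  ultimately show ?thesis unfolding adjacent_in_def using assms
    by (metis (mono_tags, lifting) Int_emptyI greaterThanLessThan_iff leD mem_Collect_eq)
qed

lemma adjacent_in_around:
  assumes "finite P" "p \<in> P" "p \<le> a" "q \<in> P" "b \<le> q" "a < b" "{a<..<b} \<inter> P = {}"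
  obtains p' q' where "adjacent_in P p' q'" "p' \<le> a" "b \<le> q'"
proof -
  define p' where "p' = Max {r \<in> P. r \<le> a}"
  have "p' \<in> {r \<in> P. r \<le> a}"
    unfolding p'_def using assms by (intro Max_in) auto
  moreover have "\<And>r. r \<in> P \<Longrightarrow> r \<le> a \<Longrightarrow> r \<le> p'"
    unfolding p'_def using assms by (intro Max_ge) auto
  ultimately have p': "p' \<in> P" "p' \<le> a" "\<And>r. r \<in> P \<Longrightarrow> r \<le> a \<Longrightarrow> r \<le> p'"
    by auto
  define q' where "q' = Min {r \<in> P. p' < r}"
  have adj: "adjacent_in P p' q'"
    unfolding q'_def using assms p' by (intro adjacent_in_Min_above[of _ _ q]) auto
  then have "a < q'" using p' unfolding adjacent_in_def by force
  with adj have "b \<le> q'" using assms unfolding adjacent_in_def by force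
  with adj p' show ?thesis by (intro that) auto
qed

lemma ThompsonF_pieces:
  assumes "f \<in> ThompsonF"
  obtains P where "finite P" "P \<subseteq> {0..1}" "0 \<in> P" "1 \<in> P" "\<forall>p\<in>P. dyadic p"
    "\<And>a b. adjacent_in P a b \<Longrightarrow> \<exists>(k::int) c. \<forall>x\<in>{a..b}. f x = 2 powr k * x + c"
proof -
  have "\<exists>P. finite P \<and> P \<subseteq> {0..1} \<and> 0 \<in> P \<and> 1 \<in> P \<and> (\<forall>p\<in>P. dyadic p) \<and>
      (\<forall>a\<in>P. \<forall>b\<in>P. a < b \<and> {a<..<b} \<inter> P = {} \<longrightarrow>
        (\<exists>(k::int) c. \<forall>x\<in>{a..b}. f x = 2 powr k * x + c))"
    using assms unfolding ThompsonF_def by simp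
  then obtain P where P: "finite P" "P \<subseteq> {0..1}" "0 \<in> P" "1 \<in> P" "\<forall>p\<in>P. dyadic p"
    "\<forall>a\<in>P. \<forall>b\<in>P. a < b \<and> {a<..<b} \<inter> P = {} \<longrightarrow>
        (\<exists>(k::int) c. \<forall>x\<in>{a..b}. f x = 2 powr k * x + c)"
    by (elim exE conjE)
  show ?thesis
  proof (rule that[OF P(1-5)])
    show "\<exists>(k::int) c. \<forall>x\<in>{a..b}. f x = 2 powr k * x + c" if "adjacent_in P a b" for a b
      using P(6) that unfolding adjacent_in_def by blast
  qed
qed

lemma ThompsonF_germ_0:
  assumes "f \<in> ThompsonF"
  obtains d k where "0 < d" "\<And>u. u \<in> {0..d} \<Longrightarrow> f u = 2 powr real_of_int k * u"
proof -
  obtain P where P: "finite P" "P \<subseteq> {0..1}" "0 \<in> P" "1 \<in> P"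
    "\<And>a b. adjacent_in P a b \<Longrightarrow> \<exists>(k::int) c. \<forall>x\<in>{a..b}. f x = 2 powr k * x + c"
    using ThompsonF_pieces[OF assms] by metis
  define d where "d = Min {q \<in> P. 0 < q}"
  have adj: "adjacent_in P 0 d"
    unfolding d_def using P by (intro adjacent_in_Min_above[of _ _ 1]) auto
  then obtain k c where kc: "\<forall>x\<in>{0..d}. f x = 2 powr real_of_int k * x + c"
    using P(5)[OF adj] by blast
  moreover have "0 < d" using adj by (simp add: adjacent_in_def)
  moreover have "c = 0" using kc \<open>0 < d\<close> ThompsonF_0[OF assms] by force
  ultimately show ?thesis by (intro that[of d k]) auto
qed

lemma ThompsonF_germ_1:
  assumes "f \<in> ThompsonF"
  obtains d k where "0 < d" "\<And>v. v \<in> {0..d} \<Longrightarrow> f (1 - v) = 1 - 2 powr real_of_int k * v"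
proof -
  obtain P where P: "finite P" "P \<subseteq> {0..1}" "0 \<in> P" "1 \<in> P"
    "\<And>a b. adjacent_in P a b \<Longrightarrow> \<exists>(k::int) c. \<forall>x\<in>{a..b}. f x = 2 powr k * x + c"
    using ThompsonF_pieces[OF assms] by metis
  define p where "p = Max {q \<in> P. q < 1}"
  have adj: "adjacent_in P p 1"
    unfolding p_def using P by (intro adjacent_in_Max_below[of _ 0]) auto
  then obtain k c where kc: "\<forall>x\<in>{p..1}. f x = 2 powr real_of_int k * x + c"
    using P(5)[OF adj] by blast
  have "p < 1" using adj by (simp add: adjacent_in_def)
  then have "c = 1 - 2 powr real_of_int k" using kc ThompsonF_1[OF assms] by force
  then have "f (1 - v) = 1 - 2 powr real_of_int k * v" if "v \<in> {0..1 - p}" for v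
    using kc that by (auto simp: algebra_simps)
  with \<open>p < 1\<close> show ?thesis by (intro that[of "1 - p" k]) auto
qed

lemma two_powr_div_power:
  "k \<le> int N \<Longrightarrow> 2 powr real_of_int k / 2 ^ N = 1 / 2 ^ nat (int N - k)"
  by (simp add: powr_realpow[symmetric] powr_diff[symmetric] powr_minus_divide[symmetric])

lemma eventually_inverse_power_le:
  assumes "0 < d" "1 < (b::real)"
  shows "\<forall>\<^sub>F n in sequentially. 1 / b ^ n \<le> d"
proof -
  have "(\<lambda>n. (1 / b) ^ n) \<longlonglongrightarrow> 0"
    using assms by (intro LIMSEQ_realpow_zero) auto
  from order_tendstoD(2)[OF this assms(1)] show ?thesis
    by eventually_elim (simp add: power_one_over)
qed

text \<open>The germs at the endpoints, in the form in which they are matched by powers of \<open>x0\<^sup>-\<^sup>1\<close>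
  and of \<open>x0 x1\<close>.\<close>

lemma ThompsonF_germ_0_scaled:
  assumes "g \<in> ThompsonF"
  obtains K N :: nat where "\<And>x. x \<in> {0..1/2} \<Longrightarrow> g (x / 2 ^ N) = x / 2 ^ K"
proof -
  obtain d k where d: "0 < d" "\<And>u. u \<in> {0..d} \<Longrightarrow> g u = 2 powr real_of_int k * u"
    using ThompsonF_germ_0[OF assms] by metis
  have "\<forall>\<^sub>F N in sequentially. 1 / 2 ^ N \<le> d"
    using d(1) by (simp add: eventually_inverse_power_le)
  moreover have "\<forall>\<^sub>F N in sequentially. nat k \<le> N" by simp
  ultimately have "\<forall>\<^sub>F N in sequentially. 1 / 2 ^ N \<le> d \<and> k \<le> int N"
    by eventually_elim auto
  then obtain N where N: "1 / 2 ^ N \<le> d" "k \<le> int N"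
    using eventually_happens'[OF sequentially_bot] by blast
  have "g (x / 2 ^ N) = x / 2 ^ nat (int N - k)" if "x \<in> {0..1/2}" for x
  proof -
    have "x / 2 ^ N \<le> 1 / 2 ^ N" using that by (simp add: divide_right_mono)
    with N that have "g (x / 2 ^ N) = 2 powr real_of_int k / 2 ^ N * x" by (simp add: d(2))
    with N(2) show ?thesis by (simp add: two_powr_div_power)
  qed
  then show ?thesis by (rule that)
qed

lemma ThompsonF_germ_1_scaled:
  assumes "g \<in> ThompsonF"
  obtains L M :: nat where "\<And>w. w \<in> {0..1/2} \<Longrightarrow> g (1 - w / 4 ^ M) = 1 - w / 2 ^ L"
proof -
  obtain d k where d: "0 < d" "\<And>v. v \<in> {0..d} \<Longrightarrow> g (1 - v) = 1 - 2 powr real_of_int k * v"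
    using ThompsonF_germ_1[OF assms] by metis
  have "\<forall>\<^sub>F M in sequentially. 1 / 4 ^ M \<le> d"
    using d(1) by (simp add: eventually_inverse_power_le)
  moreover have "\<forall>\<^sub>F M in sequentially. nat k \<le> M" by simp
  ultimately have "\<forall>\<^sub>F M in sequentially. 1 / 4 ^ M \<le> d \<and> k \<le> int (2 * M)"
    by eventually_elim auto
  then obtain M where M: "1 / 4 ^ M \<le> d" "k \<le> int (2 * M)"
    using eventually_happens'[OF sequentially_bot] by blast
  have four: "(4::real) ^ M = 2 ^ (2 * M)" by (simp add: power_mult)
  have "g (1 - w / 4 ^ M) = 1 - w / 2 ^ nat (int (2 * M) - k)" if "w \<in> {0..1/2}" for w
  proof -
    have "w / 4 ^ M \<le> 1 / 4 ^ M" using that by (simp add: divide_right_mono)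
    with M that have "g (1 - w / 4 ^ M) = 1 - 2 powr real_of_int k / 2 ^ (2 * M) * w"
      by (simp add: d(2) four)
    with M(2) show ?thesis by (simp add: two_powr_div_power)
  qed
  then show ?thesis by (rule that)
qed

subsection \<open>Dynamics of \<open>x0\<close> and \<open>x0 x1\<close> near the endpoints\<close>

lemma divide_power_le_self: "0 \<le> t \<Longrightarrow> 1 \<le> (b::real) \<Longrightarrow> t / b ^ n \<le> t"
  using divide_left_mono[of 1 "b ^ n" t] by (simp add: one_le_power)

lemma x0_inv_left: "0 \<le> t \<Longrightarrow> t \<le> 1/2 \<Longrightarrow> x0_inv t = t / 2"
  by (simp add: x0_inv_def)

lemma x0_inv_right: "0 \<le> v \<Longrightarrow> v \<le> 1/4 \<Longrightarrow> x0_inv (1 - v) = 1 - 2 * v"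
  by (simp add: x0_inv_def)

lemma x0_inv_pow_left: "0 \<le> t \<Longrightarrow> t \<le> 1/2 \<Longrightarrow> (x0_inv ^^ n) t = t / 2 ^ n"
proof (induction n)
  case (Suc n)
  have "t / 2 ^ n \<le> t" using Suc.prems by (simp add: divide_power_le_self)
  then have "x0_inv (t / 2 ^ n) = t / 2 ^ n / 2"
    using Suc.prems by (intro x0_inv_left) (simp, linarith)
  with Suc show ?case by simp
qed simp

lemma x0_inv_pow_right: "0 \<le> w \<Longrightarrow> w \<le> 1/2 \<Longrightarrow> (x0_inv ^^ n) (1 - w / 2 ^ n) = 1 - w"
proof (induction n arbitrary: w)
  case (Suc n)
  define u where "u = w / 2 ^ n"
  have "0 \<le> u" "u \<le> w" using Suc.prems by (simp_all add: u_def divide_power_le_self)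
  then have "x0_inv (1 - u / 2) = 1 - 2 * (u / 2)"
    using Suc.prems by (intro x0_inv_right) linarith+
  then have "x0_inv (1 - w / 2 ^ Suc n) = 1 - w / 2 ^ n"
    by (simp add: u_def field_simps)
  with Suc show ?case by (simp del: funpow.simps add: funpow_Suc_right)
qed simp

lemma x0x1_left: "0 \<le> t \<Longrightarrow> t \<le> 3/8 \<Longrightarrow> fmul x0 x1 t = 2 * t"
  by (simp add: fmul_def x0_def x1_def)

lemma x0x1_right: "0 \<le> v \<Longrightarrow> v \<le> 1/2 \<Longrightarrow> fmul x0 x1 (1 - v) = 1 - v / 4"
  by (auto simp: fmul_def x0_def x1_def field_simps)

lemma x0x1_middle: "1/4 \<le> t \<Longrightarrow> t \<le> 1/2 \<Longrightarrow> fmul x0 x1 t \<in> {1/2..7/8}"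
  by (auto simp: fmul_def x0_def x1_def)

lemma x0x1_pow_left: "0 \<le> t \<Longrightarrow> t \<le> 3/4 \<Longrightarrow> (fmul x0 x1 ^^ n) (t / 2 ^ n) = t"
proof (induction n arbitrary: t)
  case (Suc n)
  have "t / 2 ^ Suc n \<le> 3/8" using Suc.prems divide_power_le_self[of t 2 n] by simp
  then have "fmul x0 x1 (t / 2 ^ Suc n) = t / 2 ^ n"
    using Suc.prems by (subst x0x1_left) auto
  with Suc show ?case by (simp del: funpow.simps add: funpow_Suc_right)
qed simp

lemma x0x1_pow_right: "0 \<le> w \<Longrightarrow> w \<le> 1/2 \<Longrightarrow> (fmul x0 x1 ^^ n) (1 - w) = 1 - w / 4 ^ n"
proof (induction n)
  case (Suc n)
  have "w / 4 ^ n \<le> w" using Suc.prems by (simp add: divide_power_le_self)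
  then have "fmul x0 x1 (1 - w / 4 ^ n) = 1 - w / 4 ^ n / 4"
    using Suc.prems by (intro x0x1_right) (simp, linarith)
  with Suc show ?case by (simp add: mult.commute)
qed simp

lemma fconj_eq: "fconj a g = g \<circ> a \<circ> inv g"
  by (simp add: fconj_def fmul_def o_assoc)

lemma funpow_fconj: "bij g \<Longrightarrow> fconj a g ^^ n = g \<circ> a ^^ n \<circ> inv g"
  by (induction n) (auto simp: fconj_eq fun_eq_iff bij_is_surj surj_f_inv_f bij_is_inj)

text \<open>Push a point towards 0 with \<open>x0\<^sup>-\<^sup>1\<close>, where \<open>g\<close> is linear, let the conjugate carry it across
  to a neighbourhood of 1, where \<open>g\<close> is linear again, and return with \<open>x0\<^sup>-\<^sup>1\<close>.\<close>

lemma (in bij_group) x0x1_middle_from_conjugate: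
  assumes g: "g \<in> ThompsonF" and x0: "x0 \<in> H" and y: "fconj (fmul x0 x1) g \<in> H"
  shows "\<exists>h\<in>H. \<forall>x\<in>{1/4..1/2}. h x = fmul x0 x1 x"
proof -
  let ?z = "fmul x0 x1"
  obtain K N :: nat where KN: "\<And>x. x \<in> {0..1/2} \<Longrightarrow> g (x / 2 ^ N) = x / 2 ^ K"
    using ThompsonF_germ_0_scaled[OF g] by metis
  obtain L M :: nat where LM: "\<And>w. w \<in> {0..1/2} \<Longrightarrow> g (1 - w / 4 ^ M) = 1 - w / 2 ^ L"
    using ThompsonF_germ_1_scaled[OF g] by metis
  have bg: "bij g" by (rule bij_ThompsonF[OF g])
  have x0_inv: "x0_inv \<in> H" using inv_mem[OF x0] by (simp add: inv_x0)
  define h where "h = x0_inv ^^ L \<circ> fconj ?z g ^^ (M + 1 + N) \<circ> x0_inv ^^ K"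
  have "h \<in> H" unfolding h_def using x0_inv y by (intro comp_mem funpow_mem)
  moreover have "h x = ?z x" if x: "x \<in> {1/4..1/2}" for x
  proof -
    define w where "w = 1 - ?z x"
    have w: "w \<in> {0..1/2}" using x0x1_middle[of x] x by (auto simp: w_def)
    have "(x0_inv ^^ K) x = g (x / 2 ^ N)"
      using x x0_inv_pow_left[of x K] KN[of x] by simp
    then have "inv g ((x0_inv ^^ K) x) = x / 2 ^ N"
      using bg by (simp add: bij_is_inj)
    moreover have "(?z ^^ N) (x / 2 ^ N) = x"
      using x by (intro x0x1_pow_left) auto
    moreover have "(?z ^^ M) (?z x) = 1 - w / 4 ^ M"
      using x0x1_pow_right[OF _ _, of w M] w by (simp add: w_def)
    moreover have "fconj ?z g ^^ (M + 1 + N) = g \<circ> ?z ^^ M \<circ> ?z \<circ> ?z ^^ N \<circ> inv g"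
      by (simp add: funpow_fconj[OF bg] funpow_add funpow_swap1 fun_eq_iff)
    ultimately have "(fconj ?z g ^^ (M + 1 + N)) ((x0_inv ^^ K) x) = 1 - w / 2 ^ L"
      using LM[OF w] by simp
    then show ?thesis
      using x0_inv_pow_right[of w L] w by (simp add: h_def w_def)
  qed
  ultimately show ?thesis by blast
qed

definition on_grid :: "nat \<Rightarrow> real \<Rightarrow> bool" where
  "on_grid N x \<longleftrightarrow> (\<exists>i::int. x = of_int i / 2 ^ N)"

lemma on_grid_mono:
  assumes "on_grid N x" "N \<le> M"
  shows "on_grid M x"
proof -
  obtain i where "x = of_int i / 2 ^ N" using assms(1) unfolding on_grid_def by blast
  moreover have "(2::real) ^ M = 2 ^ N * 2 ^ (M - N)"
    using assms(2) by (simp flip: power_add)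
  ultimately have "x = of_int (i * 2 ^ (M - N)) / 2 ^ M"
    by simp
  then show ?thesis unfolding on_grid_def by blast
qed

lemma eventually_on_grid:
  assumes "dyadic x"
  shows "\<forall>\<^sub>F N in sequentially. on_grid N x"
proof -
  obtain n where "on_grid n x" using assms unfolding dyadic_def on_grid_def by blast
  then show ?thesis
    using on_grid_mono by (auto simp: eventually_sequentially)
qed

lemma not_on_grid_between:
  assumes "on_grid N q"
  shows "q \<notin> {of_int j / 2 ^ N <..< (of_int j + 1) / 2 ^ N}"
proof
  obtain i where i: "q = of_int i / 2 ^ N" using assms unfolding on_grid_def by blast
  assume "q \<in> {of_int j / 2 ^ N <..< (of_int j + 1) / 2 ^ N}"
  then have "j < i" "i < j + 1" unfolding i by (simp_all add: divide_less_cancel)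
  then show False by simp
qed

lemma dyadic_interval_within_adjacent:
  assumes P: "finite P" "0 \<in> P" "1 \<in> P" "\<forall>q\<in>P. on_grid N q" and j: "0 \<le> j" "j < 2 ^ N"
  obtains p q where "adjacent_in P p q" "dyadic_interval j N \<subseteq> {p..q}"
proof -
  define a b where "a = of_int j / (2::real) ^ N" and "b = (of_int j + 1) / (2::real) ^ N"
  have "j + 1 \<le> 2 ^ N" using j by linarith
  then have "of_int (j + 1) \<le> (of_int (2 ^ N) :: real)" by (simp only: of_int_le_iff)
  then have "0 \<le> a" "a < b" "b \<le> 1"
    using j by (simp_all add: a_def b_def divide_le_eq divide_strict_right_mono)
  moreover have "q \<notin> {a<..<b}" if "q \<in> P" for q
    using not_on_grid_between[of N q j] P(4) that by (simp add: a_def b_def)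
  then have "{a<..<b} \<inter> P = {}" by blast
  ultimately obtain p q where "adjacent_in P p q" "p \<le> a" "b \<le> q"
    using P by (elim adjacent_in_around[of P 0 a 1 b]) auto
  then show ?thesis
    by (intro that[of p q]) (auto simp: dyadic_interval_def a_def b_def)
qed

lemma dyadic_add: "dyadic x \<Longrightarrow> dyadic y \<Longrightarrow> dyadic (x + y)"
proof -
  assume "dyadic x" "dyadic y"
  then obtain m n m' n' where x: "x = real_of_int m / 2 ^ n" and y: "y = real_of_int m' / 2 ^ n'"
    unfolding dyadic_def by blast
  have "x + y = real_of_int (m * 2 ^ n' + m' * 2 ^ n) / 2 ^ (n + n')"
    unfolding x y by (simp add: field_simps power_add)
  then show ?thesis unfolding dyadic_def by blast
qed

lemma dyadic_scale: "dyadic x \<Longrightarrow> dyadic (2 powr real_of_int k * x)"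
proof -
  assume "dyadic x"
  then obtain m n where x: "x = real_of_int m / 2 ^ n" unfolding dyadic_def by blast
  show ?thesis
  proof (cases "0 \<le> k")
    case True
    then have "2 powr real_of_int k * x = real_of_int (m * 2 ^ nat k) / 2 ^ n"
      unfolding x by (simp add: powr_realpow[symmetric])
    then show ?thesis unfolding dyadic_def by blast
  next
    case False
    have "(2::real) ^ nat (- k) = 2 powr real_of_int (- k)"
      using False by (simp add: powr_realpow[symmetric])
    then have "2 powr real_of_int k = 1 / 2 ^ nat (- k)"
      by (simp add: powr_minus_divide)
    then have "2 powr real_of_int k * x = real_of_int m / 2 ^ (n + nat (- k))"
      unfolding x by (simp add: power_add)
    then show ?thesis unfolding dyadic_def by blast
  qed
qed

lemma dyadic_uminus: "dyadic x \<Longrightarrow> dyadic (- x)"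
  unfolding dyadic_def by (metis minus_divide_left of_int_minus)

subsection \<open>Elements of F on a fine dyadic grid\<close>

lemma dyadic_intercept:
  assumes "dyadic a" "dyadic (2 powr real_of_int k * a + c)"
  shows "dyadic c"
proof -
  have "dyadic ((2 powr real_of_int k * a + c) + - (2 powr real_of_int k * a))"
    by (rule dyadic_add[OF assms(2) dyadic_uminus[OF dyadic_scale[OF assms(1)]]])
  then show ?thesis by simp
qed

lemma ThompsonF_dyadic_at_breakpoints:
  assumes f: "f \<in> ThompsonF" and P: "finite P" "P \<subseteq> {0..1}" "0 \<in> P" "\<forall>p\<in>P. dyadic p"
    and pieces: "\<And>a b. adjacent_in P a b \<Longrightarrow> \<exists>(k::int) c. \<forall>x\<in>{a..b}. f x = 2 powr k * x + c"
    and a: "a \<in> P"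
  shows "dyadic (f a)"
  using a
proof (induction "card {q \<in> P. q < a}" arbitrary: a rule: less_induct)
  case less
  show ?case
  proof (cases "a = 0")
    case True
    then show ?thesis using f by (simp add: dyadic_def)
  next
    case False
    with less.prems P have "0 < a" by force
    define p where "p = Max {q \<in> P. q < a}"
    have adj: "adjacent_in P p a"
      unfolding p_def using P \<open>0 < a\<close> less.prems by (intro adjacent_in_Max_below[of _ 0]) auto
    then have "{q \<in> P. q < p} \<subset> {q \<in> P. q < a}"
      by (auto simp: adjacent_in_def)
    then have "card {q \<in> P. q < p} < card {q \<in> P. q < a}"
      using P(1) by (intro psubset_card_mono) auto
    then have "dyadic (f p)" using less.hyps adj by (simp add: adjacent_in_def)
    moreover obtain k c where kc: "\<forall>x\<in>{p..a}. f x = 2 powr real_of_int k * x + c"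
      using pieces[OF adj] by blast
    moreover have "dyadic p" "dyadic a" using adj P(4) by (auto simp: adjacent_in_def)
    ultimately have "dyadic c" using adj by (auto simp: adjacent_in_def intro: dyadic_intercept)
    moreover have "f a = 2 powr real_of_int k * a + c"
      using kc adj by (simp add: adjacent_in_def)
    ultimately show ?thesis using \<open>dyadic a\<close> by (simp add: dyadic_add dyadic_scale)
  qed
qed

lemma ThompsonF_dyadic_pieces:
  assumes f: "f \<in> ThompsonF"
  obtains P where "finite P" "P \<subseteq> {0..1}" "0 \<in> P" "1 \<in> P" "\<forall>p\<in>P. dyadic p"
    "\<And>a b. adjacent_in P a b \<Longrightarrow> \<exists>(k::int) c. dyadic c \<and> (\<forall>x\<in>{a..b}. f x = 2 powr k * x + c)"
proof -
  obtain P where P: "finite P" "P \<subseteq> {0..1}" "0 \<in> P" "1 \<in> P" "\<forall>p\<in>P. dyadic p"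
    and pieces: "\<And>a b. adjacent_in P a b \<Longrightarrow> \<exists>(k::int) c. \<forall>x\<in>{a..b}. f x = 2 powr k * x + c"
    using ThompsonF_pieces[OF f] by metis
  show ?thesis
  proof (rule that[OF P])
    fix a b assume adj: "adjacent_in P a b"
    then obtain k c where kc: "\<forall>x\<in>{a..b}. f x = 2 powr real_of_int k * x + c"
      using pieces by blast
    have "dyadic (f a)"
      using ThompsonF_dyadic_at_breakpoints[OF f P(1-3,5) pieces] adj by (simp add: adjacent_in_def)
    with kc adj P(5) have "dyadic c"
      by (auto simp: adjacent_in_def intro: dyadic_intercept)
    with kc show "\<exists>(k::int) c. dyadic c \<and> (\<forall>x\<in>{a..b}. f x = 2 powr k * x + c)"
      by blast
  qed
qed

lemma affine_eq_dyadic_affine: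
  assumes f: "\<forall>x\<in>dyadic_interval j N. f x = 2 powr real_of_int k * x + c"
    and k: "k \<le> int N" and c: "on_grid (nat (int N - k)) c"
  shows "\<exists>j'. \<forall>x\<in>dyadic_interval j N. f x = dyadic_affine j N j' (nat (int N - k)) x"
proof -
  define N' where "N' = nat (int N - k)"
  obtain m where m: "c = of_int m / 2 ^ N'" using c unfolding on_grid_def N'_def by blast
  have "2 powr real_of_int k = 2 ^ N / 2 ^ N'"
    using two_powr_div_power[OF k] by (simp add: N'_def field_simps)
  then have "\<forall>x\<in>dyadic_interval j N. f x = dyadic_affine j N (j + m) N' x"
    using f by (simp add: m dyadic_affine_def field_simps)
  then show ?thesis unfolding N'_def by blast
qed

lemma eventually_dyadic_affine_on_grid:
  assumes c: "dyadic c" and f: "\<forall>x\<in>{a..b}. f x = 2 powr real_of_int k * x + c"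
  shows "\<forall>\<^sub>F N in sequentially. \<forall>j. dyadic_interval j N \<subseteq> {a..b} \<longrightarrow>
           (\<exists>j' N'. \<forall>x\<in>dyadic_interval j N. f x = dyadic_affine j N j' N' x)"
proof -
  obtain n where n: "on_grid n c" using c unfolding dyadic_def on_grid_def by blast
  have "\<forall>\<^sub>F N in sequentially. n + nat k \<le> N" by simp
  then show ?thesis
  proof eventually_elim
    case (elim N)
    then have N: "k \<le> int N" "on_grid (nat (int N - k)) c"
      by (linarith, intro on_grid_mono[OF n]) linarith
    show ?case
    proof (intro allI impI)
      fix j assume "dyadic_interval j N \<subseteq> {a..b}"
      with f have "\<forall>x\<in>dyadic_interval j N. f x = 2 powr real_of_int k * x + c" by blast
      from affine_eq_dyadic_affine[OF this N]
      show "\<exists>j' N'. \<forall>x\<in>dyadic_interval j N. f x = dyadic_affine j N j' N' x" by blast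
    qed
  qed
qed

lemma ThompsonF_eventually_grid_affine:
  assumes f: "f \<in> ThompsonF"
  shows "\<forall>\<^sub>F N in sequentially. \<forall>j. 0 \<le> j \<and> j < 2 ^ N \<longrightarrow>
           (\<exists>j' N'. \<forall>x\<in>dyadic_interval j N. f x = dyadic_affine j N j' N' x)"
proof -
  obtain P where P: "finite P" "P \<subseteq> {0..1}" "0 \<in> P" "1 \<in> P" "\<forall>p\<in>P. dyadic p"
    and pieces: "\<And>a b. adjacent_in P a b \<Longrightarrow>
      \<exists>(k::int) c. dyadic c \<and> (\<forall>x\<in>{a..b}. f x = 2 powr k * x + c)"
    using ThompsonF_dyadic_pieces[OF f] by metis
  define A where "A = {(a, b) \<in> P \<times> P. adjacent_in P a b}"
  have "A \<subseteq> P \<times> P" unfolding A_def by blast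
  then have "finite A" by (rule finite_subset) (simp add: P(1))
  have "\<forall>\<^sub>F N in sequentially. \<forall>j. dyadic_interval j N \<subseteq> {a..b} \<longrightarrow>
           (\<exists>j' N'. \<forall>x\<in>dyadic_interval j N. f x = dyadic_affine j N j' N' x)"
    if "adjacent_in P a b" for a b
    using pieces[OF that] eventually_dyadic_affine_on_grid by blast
  then have "\<forall>\<^sub>F N in sequentially. \<forall>(a, b)\<in>A. \<forall>j. dyadic_interval j N \<subseteq> {a..b} \<longrightarrow>
           (\<exists>j' N'. \<forall>x\<in>dyadic_interval j N. f x = dyadic_affine j N j' N' x)"
    using \<open>finite A\<close> by (intro eventually_ball_finite) (auto simp: A_def)
  moreover have "\<forall>\<^sub>F N in sequentially. \<forall>q\<in>P. on_grid N q"
    using P(1,5) by (intro eventually_ball_finite) (auto intro: eventually_on_grid)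
  ultimately show ?thesis
  proof eventually_elim
    case (elim N)
    show ?case
    proof (intro allI impI)
      fix j :: int assume "0 \<le> j \<and> j < 2 ^ N"
      then obtain p q where pq: "adjacent_in P p q" "dyadic_interval j N \<subseteq> {p..q}"
        using P elim(2) by (elim dyadic_interval_within_adjacent) auto
      then have "(p, q) \<in> A" by (simp add: A_def adjacent_in_def)
      with elim(1) pq(2)
      show "\<exists>j' N'. \<forall>x\<in>dyadic_interval j N. f x = dyadic_affine j N j' N' x" by blast
    qed
  qed
qed

lemma ThompsonF_dyadic_affine_bounds:
  assumes f: "f \<in> ThompsonF" and j: "0 \<le> j" "j < 2 ^ N"
    and fj: "\<forall>x\<in>dyadic_interval j N. f x = dyadic_affine j N j' N' x"
  shows "0 \<le> j'" "j' + 1 \<le> 2 ^ N'" "j = 0 \<longleftrightarrow> j' = 0" "j + 1 = 2 ^ N \<longleftrightarrow> j' + 1 = 2 ^ N'"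
proof -
  define a b where "a = of_int j / (2::real) ^ N" and "b = of_int (j + 1) / (2::real) ^ N"
  have "j + 1 \<le> 2 ^ N" using j by linarith
  then have "of_int (j + 1) \<le> (of_int (2 ^ N) :: real)" by (simp only: of_int_le_iff)
  then have ab: "a \<in> {0..1}" "b \<in> {0..1}"
    using j by (auto simp: a_def b_def divide_le_eq)
  have "a \<in> dyadic_interval j N" "b \<in> dyadic_interval j N"
    by (simp_all add: dyadic_interval_def a_def b_def divide_right_mono)
  then have "f a = of_int j' / 2 ^ N'" "f b = of_int (j' + 1) / 2 ^ N'"
    using fj by (simp_all add: dyadic_affine_def a_def b_def)
  then have fab: "f a * 2 ^ N' = of_int j'" "f b * 2 ^ N' = of_int (j' + 1)"
    by simp_all
  have "0 \<le> f a * 2 ^ N'" using ThompsonF_maps_unit[OF f ab(1)] by simp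
  with fab show "0 \<le> j'" by simp
  have "f b * 2 ^ N' \<le> 2 ^ N'" using ThompsonF_maps_unit[OF f ab(2)] by simp
  with fab have "real_of_int (j' + 1) \<le> of_int (2 ^ N')" by simp
  then show "j' + 1 \<le> 2 ^ N'" by (simp only: of_int_le_iff)
  have "j = 0 \<longleftrightarrow> a = 0" by (simp add: a_def)
  also have "\<dots> \<longleftrightarrow> f a = 0" using ThompsonF_eq_iff[OF f ab(1), of 0] ThompsonF_0[OF f] by simp
  also have "\<dots> \<longleftrightarrow> j' = 0" using fab(1) by auto
  finally show "j = 0 \<longleftrightarrow> j' = 0" .
  have "j + 1 = 2 ^ N \<longleftrightarrow> real_of_int (j + 1) = of_int (2 ^ N)" by (simp only: of_int_eq_iff)
  also have "\<dots> \<longleftrightarrow> b = 1" by (auto simp: b_def)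
  also have "\<dots> \<longleftrightarrow> f b = 1" using ThompsonF_eq_iff[OF f ab(2), of 1] ThompsonF_1[OF f] by simp
  also have "\<dots> \<longleftrightarrow> f b * 2 ^ N' = 2 ^ N'" by auto
  also have "\<dots> \<longleftrightarrow> real_of_int (j' + 1) = of_int (2 ^ N')" using fab(2) by simp
  also have "\<dots> \<longleftrightarrow> j' + 1 = 2 ^ N'" by (simp only: of_int_eq_iff)
  finally show "j + 1 = 2 ^ N \<longleftrightarrow> j' + 1 = 2 ^ N'" .
qed

lemma mem_closureF_if_grid:
  assumes f: "f \<in> ThompsonF"
    and pieces: "\<And>j. 0 \<le> j \<Longrightarrow> j < 2 ^ N \<Longrightarrow> \<exists>h\<in>H. \<forall>x\<in>dyadic_interval j N. f x = h x"
  shows "f \<in> closureF H"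
proof -
  define P where "P = (\<lambda>j::int. of_int j / (2::real) ^ N) ` {0..2 ^ N}"
  have "finite P" "P \<subseteq> {0..1}" "0 \<in> P" "1 \<in> P"
    unfolding P_def by (auto simp: divide_le_eq intro: image_eqI[of _ _ 0] image_eqI[of _ _ "2 ^ N"])
  moreover have "\<forall>a\<in>P. \<forall>b\<in>P. a < b \<and> {a<..<b} \<inter> P = {} \<longrightarrow> (\<exists>h\<in>H. \<forall>x\<in>{a..b}. f x = h x)"
  proof (intro ballI impI)
    fix a b assume "a \<in> P" "b \<in> P" and "a < b \<and> {a<..<b} \<inter> P = {}"
    then have ab: "a \<in> P" "b \<in> P" "a < b" "{a<..<b} \<inter> P = {}" by auto
    obtain j j2 where j: "0 \<le> j" "j2 \<le> 2 ^ N" "a = of_int j / 2 ^ N" "b = of_int j2 / 2 ^ N"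
      using ab(1,2) unfolding P_def by auto
    have "j < j2" using ab(3) j by (simp add: divide_less_cancel)
    have "j2 = j + 1"
    proof (rule ccontr)
      assume "j2 \<noteq> j + 1"
      with \<open>j < j2\<close> have "j + 1 < j2" by simp
      with j have "of_int (j + 1) / (2::real) ^ N \<in> P"
        unfolding P_def by (intro image_eqI[of _ _ "j + 1"]) auto
      moreover have "of_int (j + 1) / (2::real) ^ N \<in> {a<..<b}"
        using j \<open>j + 1 < j2\<close> by (simp add: divide_less_cancel)
      ultimately have "of_int (j + 1) / (2::real) ^ N \<in> {a<..<b} \<inter> P" by blast
      with ab(4) show False by blast
    qed
    with j \<open>j < j2\<close> have "{a..b} = dyadic_interval j N" "j < 2 ^ N"
      by (simp_all add: dyadic_interval_def)
    with pieces j(1) show "\<exists>h\<in>H. \<forall>x\<in>{a..b}. f x = h x" by simp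
  qed
  ultimately have "\<exists>P. finite P \<and> P \<subseteq> {0..1} \<and> 0 \<in> P \<and> 1 \<in> P \<and>
      (\<forall>a\<in>P. \<forall>b\<in>P. a < b \<and> {a<..<b} \<inter> P = {} \<longrightarrow> (\<exists>h\<in>H. \<forall>x\<in>{a..b}. f x = h x))"
    by (intro exI[of _ P] conjI)
  with f show ?thesis unfolding closureF_def by simp
qed

lemma (in transport_group) ThompsonF_subset_closureF: "ThompsonF \<subseteq> closureF H"
proof
  fix f assume f: "f \<in> ThompsonF"
  have "\<forall>\<^sub>F N in sequentially. 1 \<le> N \<and> (\<forall>j. 0 \<le> j \<and> j < 2 ^ N \<longrightarrow>
           (\<exists>j' N'. \<forall>x\<in>dyadic_interval j N. f x = dyadic_affine j N j' N' x))"
    using ThompsonF_eventually_grid_affine[OF f] eventually_ge_at_top[of 1]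
    by eventually_elim auto
  then obtain N where N: "1 \<le> N" "\<And>j. 0 \<le> j \<Longrightarrow> j < 2 ^ N \<Longrightarrow>
      \<exists>j' N'. \<forall>x\<in>dyadic_interval j N. f x = dyadic_affine j N j' N' x"
    using eventually_happens'[OF sequentially_bot] by blast
  show "f \<in> closureF H"
  proof (rule mem_closureF_if_grid[OF f])
    fix j :: int assume j: "0 \<le> j" "j < 2 ^ N"
    then obtain j' N' where fj: "\<forall>x\<in>dyadic_interval j N. f x = dyadic_affine j N j' N' x"
      using N(2) by blast
    have "carries H j N j' N'"
      using ThompsonF_dyadic_affine_bounds[OF f j fj] j N(1) by (intro carries_same_kind) auto
    then obtain h where h: "h \<in> H" "\<forall>x\<in>dyadic_interval j N. h x = dyadic_affine j N j' N' x"
      unfolding carries_def by blast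
    show "\<exists>h\<in>H. \<forall>x\<in>dyadic_interval j N. f x = h x"
      using fj h(2) by (intro bexI[OF _ h(1)]) simp
  qed
qed

theorem lemma3p2:
  assumes "g \<in> ThompsonF"
  shows "closureF (gen_subgroup {x0, fconj (fmul x0 x1) g}) = ThompsonF"
proof -
  let ?H = "gen_subgroup {x0, fconj (fmul x0 x1) g}"
  have "bij (fconj (fmul x0 x1) g)"
    using bij_ThompsonF[OF assms] bij_x0 bij_x1
    by (simp add: fconj_eq fmul_def bij_comp bij_imp_bij_inv)
  then interpret bij_group ?H
    using bij_x0 by (intro bij_group_gen_subgroup) auto
  have "x0 \<in> ?H" "fconj (fmul x0 x1) g \<in> ?H" by (simp_all add: gen_base)
  then interpret transport_group ?H
    using x0x1_middle_from_conjugate[OF assms] by unfold_locales auto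
  show ?thesis
    using ThompsonF_subset_closureF by (auto simp: closureF_def)
qed

end
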